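(* Let $G=(V,E)$ be a finite connected graph satisfying CD$(F;0)$ for some CD-function $F$, with relaxation function $\varphi$. Let $u:[0,\infty)\times V\to(0,\infty)$ solve the heat equation on $G$. Then for all $0<t_1<t_2$ and $x_1,x_2\in V$, $$u(t_1,x_1)\le u(t_2,x_2)\exp\Big(\int_{t_1}^{t_2}\varphi(t)\,dt\Big)\exp\Big(\frac{2\mu_{max}\,d(x_1,x_2)^2}{w_{min}(t_2-t_1)}\Big),$$ where $\mu_{max}=\max_V\mu$, $w_{min}=\min_{xy\in E}w_{xy}$ and $d$ is the combinatorial graph distance.
   Context: Graphs are undirected and locally finite; $x\sim y$ means $xy\in E$; each edge has a weight $w_{xy}=w_{yx}>0$; $\mu:V\to(0,\infty)$. The Laplacian is $\Delta u(x)=\frac1{\mu(x)}\sum_{y\sim x}w_{xy}(u(y)-u(x))$ and $L:=-\Delta$. For $H:\mathbb R\to\mathbb R$, $\Psi_H(v)(x)=\frac1{\mu(x)}\sum_{y\sim x}w_{xy}H(v(y)-v(x))$; $\Upsilon(z)=e^z-1-z$. A CD-function is a continuous $F:[0,\infty)\to[0,\infty)$ with $F(0)=0$, $F(x)/x$ strictly increasing on $(0,\infty)$, $\int_1^\infty dr/F(r)<\infty$. Its relaxation function is the unique positive solution $\varphi$ on $(0,\infty)$ of $\dot\varphi+F(\varphi)=0$ with $\varphi(0+)=\infty$. $G$ satisfies CD$(F;0)$ if for every $x\in V$ and every $v:V\to\mathbb R$ with $Lv(x)>0$ and $Lv(x)\ge Lv(y)$ for all $y\sim x$, one has $\Delta\Psi_{\Upsilon'}(v)(x)\ge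 F(Lv(x))$. A solution of the heat equation is $u(t,x)$, $C^1$ in $t$, with $\partial_tu=\Delta u$ on $[0,\infty)\times V$. *)

theory Defs
  imports "HOL-Analysis.Analysis"
begin

text \<open>A weighted graph is given by a vertex set V, an edge relation E (x \<sim> y iff E x y),
  edge weights w and a vertex measure mu. Functions on V are functions on the ambient type.\<close>

definition weighted_graph ::
  "'a set \<Rightarrow> ('a \<Rightarrow> 'a \<Rightarrow> bool) \<Rightarrow> ('a \<Rightarrow> 'a \<Rightarrow> real) \<Rightarrow> ('a \<Rightarrow> real) \<Rightarrow> bool" where
  "weighted_graph V E w mu \<longleftrightarrow>
     (\<forall>x y. E x y \<longrightarrow> x \<in> V \<and> y \<in> V) \<and>
     (\<forall>x y. E x y \<longrightarrow> E y x) \<and>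
     (\<forall>x y. E x y \<longrightarrow> w x y = w y x \<and> w x y > 0) \<and>
     (\<forall>x\<in>V. mu x > 0)"

definition nbrs :: "'a set \<Rightarrow> ('a \<Rightarrow> 'a \<Rightarrow> bool) \<Rightarrow> 'a \<Rightarrow> 'a set" where
  "nbrs V E x = {y \<in> V. E x y}"

definition is_walk :: "'a set \<Rightarrow> ('a \<Rightarrow> 'a \<Rightarrow> bool) \<Rightarrow> 'a list \<Rightarrow> bool" where
  "is_walk V E p \<longleftrightarrow> p \<noteq> [] \<and> set p \<subseteq> V \<and> (\<forall>i. Suc i < length p \<longrightarrow> E (p ! i) (p ! Suc i))"

definition connected_graph :: "'a set \<Rightarrow> ('a \<Rightarrow> 'a \<Rightarrow> bool) \<Rightarrow> bool" where
  "connected_graph V E \<longleftrightarrow> V \<noteq> {} \<and>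
     (\<forall>x\<in>V. \<forall>y\<in>V. \<exists>p. is_walk V E p \<and> hd p = x \<and> last p = y)"

definition graph_dist :: "'a set \<Rightarrow> ('a \<Rightarrow> 'a \<Rightarrow> bool) \<Rightarrow> 'a \<Rightarrow> 'a \<Rightarrow> nat" where
  "graph_dist V E x y = (LEAST n. \<exists>p. is_walk V E p \<and> hd p = x \<and> last p = y \<and> length p = Suc n)"

definition laplacian ::
  "'a set \<Rightarrow> ('a \<Rightarrow> 'a \<Rightarrow> bool) \<Rightarrow> ('a \<Rightarrow> 'a \<Rightarrow> real) \<Rightarrow> ('a \<Rightarrow> real) \<Rightarrow> ('a \<Rightarrow> real) \<Rightarrow> 'a \<Rightarrow> real" where
  "laplacian V E w mu u x = (1 / mu x) * (\<Sum>y\<in>nbrs V E x. w x y * (u y - u x))"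

definition Psi ::
  "'a set \<Rightarrow> ('a \<Rightarrow> 'a \<Rightarrow> bool) \<Rightarrow> ('a \<Rightarrow> 'a \<Rightarrow> real) \<Rightarrow> ('a \<Rightarrow> real) \<Rightarrow> (real \<Rightarrow> real) \<Rightarrow> ('a \<Rightarrow> real) \<Rightarrow> 'a \<Rightarrow> real" where
  "Psi V E w mu H v x = (1 / mu x) * (\<Sum>y\<in>nbrs V E x. w x y * H (v y - v x))"

definition Upsilon :: "real \<Rightarrow> real" where
  "Upsilon z = exp z - 1 - z"

definition CD_function :: "(real \<Rightarrow> real) \<Rightarrow> bool" where
  "CD_function F \<longleftrightarrow>
     continuous_on {0..} F \<and> (\<forall>x\<ge>0. F x \<ge> 0) \<and> F 0 = 0 \<and>
     strict_mono_on {0<..} (\<lambda>x. F x / x) \<and>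
     (\<lambda>r. 1 / F r) integrable_on {1..}"

definition relaxation_function :: "(real \<Rightarrow> real) \<Rightarrow> (real \<Rightarrow> real) \<Rightarrow> bool" where
  "relaxation_function F phi \<longleftrightarrow>
     (\<forall>t>0. phi t > 0 \<and> (phi has_real_derivative - F (phi t)) (at t)) \<and>
     filterlim phi at_top (at_right 0)"

definition CD ::
  "'a set \<Rightarrow> ('a \<Rightarrow> 'a \<Rightarrow> bool) \<Rightarrow> ('a \<Rightarrow> 'a \<Rightarrow> real) \<Rightarrow> ('a \<Rightarrow> real) \<Rightarrow> (real \<Rightarrow> real) \<Rightarrow> bool" where
  "CD V E w mu F \<longleftrightarrow>
     (\<forall>x\<in>V. \<forall>v :: 'a \<Rightarrow> real.
        (let L = (\<lambda>z. - laplacian V E w mu v z) in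
         L x > 0 \<and> (\<forall>y\<in>nbrs V E x. L x \<ge> L y) \<longrightarrow>
         laplacian V E w mu (Psi V E w mu (deriv Upsilon) v) x \<ge> F (L x)))"

definition heat_solution ::
  "'a set \<Rightarrow> ('a \<Rightarrow> 'a \<Rightarrow> bool) \<Rightarrow> ('a \<Rightarrow> 'a \<Rightarrow> real) \<Rightarrow> ('a \<Rightarrow> real) \<Rightarrow> (real \<Rightarrow> 'a \<Rightarrow> real) \<Rightarrow> bool" where
  "heat_solution V E w mu u \<longleftrightarrow>
     (\<forall>x\<in>V. (\<forall>t\<ge>0. ((\<lambda>s. u s x) has_real_derivative laplacian V E w mu (u t) x) (at t within {0..}))
        \<and> continuous_on {0..} (\<lambda>t. laplacian V E w mu (u t) x))"

end

theory Submission
  imports Defs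
begin

text \<open>
  Put \<open>v = ln u\<close>. Then \<open>\<partial>\<^sub>t v = \<Psi>\<^bsub>\<Upsilon>'\<^esub>(v)\<close> and \<open>\<partial>\<^sub>t v + Lv = \<Psi>\<^bsub>\<Upsilon>\<^esub>(v) \<ge> 0\<close>.
  At a spatial maximum of \<open>Lv\<close>, the condition CD(F;0) gives \<open>\<partial>\<^sub>t (Lv) \<le> -F(Lv)\<close>; since
  \<open>F(x)/x\<close> is increasing, \<open>Lv\<close> can therefore never reach the barrier \<open>(1+\<epsilon>)\<phi>\<close>, which
  dominates near \<open>t = 0\<close> because \<open>\<phi>\<close> blows up there. This is the Li--Yau estimate \<open>Lv \<le> \<phi>\<close>.
  It makes \<open>v + \<integral>\<phi>\<close> nondecreasing in time, and across an edge \<open>xy\<close> the gap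
  \<open>D(m) = v(s,x) + \<integral>\<^sub>s\<^sup>m\<phi> - v(m,y)\<close> obeys the Riccati inequality \<open>D' \<le> -c D\<^sup>2/2\<close> with
  \<open>c = w\<^sub>x\<^sub>y/\<mu>(y)\<close>, because \<open>\<Upsilon>(z) \<ge> z\<^sup>2/2\<close>; hence \<open>D(t) < 2/(c(t-s))\<close>. Chaining this along a
  shortest path with equal time steps and exponentiating gives the Harnack inequality.
\<close>

lemma deriv_Upsilon: "deriv Upsilon z = exp z - 1"
  unfolding Upsilon_def by (rule DERIV_imp_deriv) (auto intro!: derivative_eq_intros)

lemma Upsilon_nonneg: "0 \<le> Upsilon z"
  using exp_ge_add_one_self[of z] unfolding Upsilon_def by linarith

lemma Upsilon_ge_half_square: "0 \<le> z \<Longrightarrow> z\<^sup>2 / 2 \<le> Upsilon z"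
  unfolding Upsilon_def using exp_lower_Taylor_quadratic[of z] by simp

lemma CD_function_nonneg: "CD_function F \<Longrightarrow> 0 \<le> x \<Longrightarrow> 0 \<le> F x"
  unfolding CD_function_def by auto

lemma CD_function_ratio_less: "CD_function F \<Longrightarrow> 0 < a \<Longrightarrow> a < b \<Longrightarrow> F a / a < F b / b"
  unfolding CD_function_def by (auto simp: strict_mono_on_def)

lemma CD_function_mono:
  assumes "CD_function F" "0 < a" "a \<le> b"
  shows "F a \<le> F b"
proof (cases "a = b")
  case False
  have "F a = a * (F a / a)" using assms by simp
  also have "\<dots> \<le> b * (F a / a)"
    using assms CD_function_nonneg[of F a] by (intro mult_right_mono) auto
  also have "\<dots> \<le> b * (F b / b)"
    using CD_function_ratio_less[of F a b] assms False by (intro mult_left_mono) auto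
  also have "\<dots> = F b" using assms by simp
  finally show ?thesis .
qed simp

lemma CD_function_scale_less:
  assumes "CD_function F" "0 < p" "1 < k"
  shows "k * F p < F (k * p)"
proof -
  have "k * F p = (k * p) * (F p / p)" using assms by simp
  also have "\<dots> < (k * p) * (F (k * p) / (k * p))"
    using CD_function_ratio_less[of F p "k * p"] assms by (intro mult_strict_left_mono) auto
  also have "\<dots> = F (k * p)" using assms by simp
  finally show ?thesis .
qed

lemma relaxation_function_pos: "relaxation_function F phi \<Longrightarrow> 0 < t \<Longrightarrow> 0 < phi t"
  unfolding relaxation_function_def by auto

lemma relaxation_function_deriv:
  "relaxation_function F phi \<Longrightarrow> 0 < t \<Longrightarrow> (phi has_real_derivative - F (phi t)) (at t)"
  unfolding relaxation_function_def by auto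

lemma relaxation_function_continuous_on:
  "relaxation_function F phi \<Longrightarrow> continuous_on {0<..} phi"
  by (rule DERIV_continuous_on, rule has_field_derivative_at_within)
     (auto intro: relaxation_function_deriv)

lemma eventually_below_blowup:
  fixes f :: "real \<Rightarrow> 'a \<Rightarrow> real"
  assumes "finite V" and f_cont: "\<And>x. x \<in> V \<Longrightarrow> continuous_on {0..} (\<lambda>t. f t x)"
    and "filterlim psi at_top (at_right 0)"
  shows "\<forall>\<^sub>F t in at_right 0. \<forall>x\<in>V. f t x < psi t"
proof -
  have "bounded (\<Union>x\<in>V. (\<lambda>t. f t x) ` {0..1})"
  proof (intro bounded_UN ballI \<open>finite V\<close>)
    fix x assume "x \<in> V"
    have "continuous_on {0..1} (\<lambda>t. f t x)"
      by (rule continuous_on_subset[OF f_cont[OF \<open>x \<in> V\<close>]]) auto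
    thus "bounded ((\<lambda>t. f t x) ` {0..1})"
      by (intro compact_imp_bounded compact_continuous_image) auto
  qed
  then obtain B where B: "\<And>t x. t \<in> {0..1} \<Longrightarrow> x \<in> V \<Longrightarrow> \<bar>f t x\<bar> \<le> B"
    unfolding bounded_real by blast
  have "\<forall>\<^sub>F t in at_right 0. B < psi t"
    using assms(3) by (simp add: filterlim_at_top_dense)
  moreover have "\<forall>\<^sub>F t in at_right (0::real). t \<in> {0..1}"
    by (auto simp: eventually_at_right_field intro!: exI[of _ 1])
  ultimately show ?thesis
    by eventually_elim (use B in force)
qed

lemma first_crossing_time:
  fixes g :: "real \<Rightarrow> 'a \<Rightarrow> real"
  assumes "finite V" "a \<le> b" and g_cont: "\<And>x. x \<in> V \<Longrightarrow> continuous_on {a..b} (\<lambda>t. g t x)"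
    and "x0 \<in> V" "0 \<le> g b x0"
  obtains s where "s \<in> {a..b}" "\<exists>x\<in>V. 0 \<le> g s x" "\<And>t x. a \<le> t \<Longrightarrow> t < s \<Longrightarrow> x \<in> V \<Longrightarrow> g t x < 0"
proof -
  define S where "S = {t \<in> {a..b}. \<exists>x\<in>V. 0 \<le> g t x}"
  have "S = (\<Union>x\<in>V. {a..b} \<inter> (\<lambda>t. g t x) -` {0..})"
    unfolding S_def by auto
  hence "closed S"
    by (simp only:) (intro closed_UN ballI continuous_closed_preimage g_cont \<open>finite V\<close>, auto)
  moreover have "b \<in> S" "bdd_below S"
    using assms unfolding S_def by (auto intro: bdd_belowI[of _ a])
  ultimately have Inf_in: "Inf S \<in> S" and Inf_le: "\<And>t. t \<in> S \<Longrightarrow> Inf S \<le> t"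
    using closed_contains_Inf[of S] by (auto intro: cInf_lower)
  show ?thesis
  proof (rule that[of "Inf S"])
    fix t x assume "a \<le> t" "t < Inf S" "x \<in> V"
    have "t \<notin> S" using Inf_le \<open>t < Inf S\<close> by force
    moreover have "t \<le> b" using Inf_in \<open>t < Inf S\<close> by (auto simp: S_def)
    ultimately show "g t x < 0" using \<open>a \<le> t\<close> \<open>x \<in> V\<close> by (force simp: S_def)
  qed (use Inf_in in \<open>auto simp: S_def\<close>)
qed

lemma barrier_principle:
  fixes f :: "real \<Rightarrow> 'a \<Rightarrow> real"
  assumes "finite V"
    and f_cont: "\<And>x. x \<in> V \<Longrightarrow> continuous_on {0..} (\<lambda>t. f t x)"
    and psi_cont: "continuous_on {0<..} psi"
    and psi_blowup: "filterlim psi at_top (at_right 0)"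
    and touching: "\<And>s x. 0 < s \<Longrightarrow> x \<in> V \<Longrightarrow> \<forall>y\<in>V. f s y \<le> f s x \<Longrightarrow> psi s \<le> f s x \<Longrightarrow>
        \<exists>f' psi'. ((\<lambda>t. f t x) has_real_derivative f') (at s)
          \<and> (psi has_real_derivative psi') (at s) \<and> f' < psi'"
    and "x0 \<in> V" "0 < t0"
  shows "f t0 x0 < psi t0"
proof (rule ccontr)
  assume "\<not> ?thesis"
  hence touched: "psi t0 \<le> f t0 x0" by simp
  define g where "g t x = f t x - psi t" for t x
  obtain d where "0 < d" and below: "\<And>t x. 0 < t \<Longrightarrow> t < d \<Longrightarrow> x \<in> V \<Longrightarrow> g t x < 0"
    using eventually_below_blowup[of V f psi] assms(1,2,4)
    unfolding eventually_at_right_field g_def by auto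
  define a where "a = min d t0 / 2"
  have a: "0 < a" "a < d" "a < t0" using \<open>0 < d\<close> \<open>0 < t0\<close> by (auto simp: a_def)
  have g_cont: "continuous_on {a..t0} (\<lambda>t. g t x)" if "x \<in> V" for x
    unfolding g_def using a
    by (intro continuous_intros continuous_on_subset[OF f_cont[OF that]]
        continuous_on_subset[OF psi_cont]) auto
  obtain s where s: "s \<in> {a..t0}" "\<exists>x\<in>V. 0 \<le> g s x"
    and before: "\<And>t x. a \<le> t \<Longrightarrow> t < s \<Longrightarrow> x \<in> V \<Longrightarrow> g t x < 0"
  proof (rule first_crossing_time[OF \<open>finite V\<close> _ g_cont \<open>x0 \<in> V\<close>])
    show "a \<le> t0" "0 \<le> g t0 x0" using a touched by (auto simp: g_def)
  qed blast+
  have "a < s"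
    using s below[of a] a by (cases "s = a") (auto, fastforce)
  have "Max (f s ` V) \<in> f s ` V"
    using \<open>finite V\<close> s(2) by (intro Max_in) auto
  then obtain xm where "xm \<in> V" "f s xm = Max (f s ` V)" by auto
  hence xm: "xm \<in> V" "\<forall>y\<in>V. f s y \<le> f s xm"
    using \<open>finite V\<close> by auto
  have "psi s \<le> f s xm"
    using s(2) xm unfolding g_def by force
  then obtain f' psi' where "((\<lambda>t. f t xm) has_real_derivative f') (at s)"
    "(psi has_real_derivative psi') (at s)" "f' < psi'"
    using touching[OF _ xm] \<open>a < s\<close> a by fastforce
  hence "((\<lambda>t. g t xm) has_real_derivative f' - psi') (at s)" "f' - psi' < 0"
    unfolding g_def by (auto intro: DERIV_diff)
  then obtain e where "0 < e" and rises: "\<And>h. 0 < h \<Longrightarrow> h < e \<Longrightarrow> g s xm < g (s - h) xm"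
    using DERIV_neg_dec_left by blast
  define h where "h = min e (s - a) / 2"
  have "0 < h" "h < e" "a \<le> s - h" using \<open>0 < e\<close> \<open>a < s\<close> by (auto simp: h_def min_def field_simps)
  hence "g s xm < g (s - h) xm" "g (s - h) xm < 0"
    using rises before[OF _ _ xm(1)] by auto
  with \<open>psi s \<le> f s xm\<close> show False unfolding g_def by linarith
qed

lemma riccati_comparison:
  fixes D :: "real \<Rightarrow> real"
  assumes "s < t" "0 < c" and D_cont: "continuous_on {s..t} D" and D_pos: "\<forall>m\<in>{s..t}. 0 < D m"
    and D_deriv: "\<And>m. s < m \<Longrightarrow> m < t \<Longrightarrow>
      \<exists>D'. (D has_real_derivative D') (at m) \<and> D' \<le> - c * (D m)\<^sup>2 / 2"
  shows "D t < 2 / (c * (t - s))"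
proof -
  define R where "R m = inverse (D m) - c * m / 2" for m
  have "R s \<le> R t"
  proof (rule DERIV_nonneg_imp_increasing_open[of s t R])
    fix m assume m: "s < m" "m < t"
    then obtain D' where D': "(D has_real_derivative D') (at m)" "D' \<le> - c * (D m)\<^sup>2 / 2"
      using D_deriv by blast
    have "0 < D m" using D_pos m by auto
    have "(R has_real_derivative - D' / (D m)\<^sup>2 - c / 2) (at m)"
      unfolding R_def using \<open>0 < D m\<close>
      by (auto intro!: derivative_eq_intros D' simp: power2_eq_square field_simps)
    moreover have "c / 2 \<le> - D' / (D m)\<^sup>2"
      using D'(2) \<open>0 < D m\<close> by (simp add: field_simps)
    ultimately show "\<exists>R'. (R has_real_derivative R') (at m) \<and> 0 \<le> R'"
      by (intro exI[of _ "- D' / (D m)\<^sup>2 - c / 2"]) auto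
  next
    show "continuous_on {s..t} R"
      unfolding R_def using D_pos by (intro continuous_intros D_cont) auto
  qed (use \<open>s < t\<close> in auto)
  moreover have "0 < inverse (D s)" using D_pos \<open>s < t\<close> by auto
  ultimately have "c * (t - s) / 2 < inverse (D t)"
    unfolding R_def right_diff_distrib diff_divide_distrib by linarith
  moreover have "0 < D t" using D_pos \<open>s < t\<close> by auto
  ultimately show ?thesis
    using \<open>0 < c\<close> \<open>s < t\<close> by (simp add: field_simps)
qed

lemma connected_graph_shortest_walk:
  assumes "connected_graph V E" "x \<in> V" "y \<in> V"
  obtains p where "is_walk V E p" "length p = Suc (graph_dist V E x y)"
    "p ! 0 = x" "p ! graph_dist V E x y = y"
proof -
  obtain p0 where p0: "is_walk V E p0" "hd p0 = x" "last p0 = y"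
    using assms unfolding connected_graph_def by blast
  hence "\<exists>p. is_walk V E p \<and> hd p = x \<and> last p = y \<and> length p = Suc (length p0 - 1)"
    unfolding is_walk_def by auto
  hence "\<exists>p. is_walk V E p \<and> hd p = x \<and> last p = y \<and> length p = Suc (graph_dist V E x y)"
    unfolding graph_dist_def by (rule LeastI)
  then obtain p where "is_walk V E p" "hd p = x" "last p = y" "length p = Suc (graph_dist V E x y)"
    by blast
  thus ?thesis
    by (intro that) (auto simp: is_walk_def hd_conv_nth last_conv_nth)
qed

lemma min_weight_over_max_measure:
  assumes "finite V" "weighted_graph V E w mu" "E x y"
  defines "c \<equiv> Min {w x y | x y. x \<in> V \<and> y \<in> V \<and> E x y} / Max (mu ` V)"
  shows "0 < c" and "c \<le> w x y / mu y"
proof -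
  define W where "W = {w x y | x y. x \<in> V \<and> y \<in> V \<and> E x y}"
  have in_V: "x \<in> V" "y \<in> V" and "0 < w x y" "0 < mu y"
    using assms(2,3) unfolding weighted_graph_def by auto
  have "W \<subseteq> (\<lambda>(x, y). w x y) ` (V \<times> V)" unfolding W_def by auto
  hence "finite W" using assms(1) by (auto intro: finite_subset)
  moreover have "w x y \<in> W" using in_V assms(3) unfolding W_def by auto
  ultimately have "Min W \<in> W" "Min W \<le> w x y" by (auto intro: Min_in)
  hence "0 < Min W" using assms(2) unfolding W_def weighted_graph_def by auto
  have "mu y \<le> Max (mu ` V)" using assms(1) in_V by simp
  hence "0 < Max (mu ` V)" using \<open>0 < mu y\<close> by linarith
  show "0 < c" unfolding c_def W_def[symmetric] using \<open>0 < Min W\<close> \<open>0 < Max (mu ` V)\<close> by simp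
  have "Min W / Max (mu ` V) \<le> w x y / Max (mu ` V)"
    using \<open>Min W \<le> w x y\<close> \<open>0 < Max (mu ` V)\<close> by (simp add: divide_right_mono)
  also have "\<dots> \<le> w x y / mu y"
    using \<open>mu y \<le> Max (mu ` V)\<close> \<open>0 < w x y\<close> \<open>0 < mu y\<close> by (intro divide_left_mono) auto
  finally show "c \<le> w x y / mu y" unfolding c_def W_def .
qed

locale graph_heat =
  fixes V :: "'a set" and E :: "'a \<Rightarrow> 'a \<Rightarrow> bool" and w :: "'a \<Rightarrow> 'a \<Rightarrow> real"
    and mu :: "'a \<Rightarrow> real" and u :: "real \<Rightarrow> 'a \<Rightarrow> real"
  assumes finite_V: "finite V" and weighted: "weighted_graph V E w mu"
    and heat: "heat_solution V E w mu u" and u_pos: "\<forall>t\<ge>0. \<forall>x\<in>V. 0 < u t x"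
begin

definition v :: "real \<Rightarrow> 'a \<Rightarrow> real" where "v t x = ln (u t x)"
definition Lv :: "real \<Rightarrow> 'a \<Rightarrow> real" where "Lv t x = - laplacian V E w mu (v t) x"
definition dv :: "real \<Rightarrow> 'a \<Rightarrow> real" where "dv t x = Psi V E w mu (deriv Upsilon) (v t) x"

lemma nbrs_subset: "nbrs V E x \<subseteq> V"
  unfolding nbrs_def by auto

lemma finite_nbrs: "finite (nbrs V E x)"
  using finite_V nbrs_subset by (rule finite_subset[rotated])

lemma mu_pos: "x \<in> V \<Longrightarrow> 0 < mu x"
  and w_pos: "E x y \<Longrightarrow> 0 < w x y"
  and w_sym: "E x y \<Longrightarrow> w x y = w y x"
  and E_sym: "E x y \<Longrightarrow> E y x"
  and E_in_V: "E x y \<Longrightarrow> x \<in> V \<and> y \<in> V"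
  using weighted unfolding weighted_graph_def by auto

lemma u_deriv:
  assumes "x \<in> V" "0 < t"
  shows "((\<lambda>s. u s x) has_real_derivative laplacian V E w mu (u t) x) (at t)"
proof -
  have "((\<lambda>s. u s x) has_real_derivative laplacian V E w mu (u t) x) (at t within {0..})"
    using heat assms unfolding heat_solution_def by auto
  moreover have "at t within {0..} = at t"
    using \<open>0 < t\<close> by (intro at_within_interior) (simp add: interior_real_atLeast)
  ultimately show ?thesis by simp
qed

lemma u_continuous_on: "x \<in> V \<Longrightarrow> continuous_on {0..} (\<lambda>t. u t x)"
  using heat unfolding heat_solution_def by (intro DERIV_continuous_on) auto

lemma v_continuous_on: "x \<in> V \<Longrightarrow> continuous_on {0..} (\<lambda>t. v t x)"
  unfolding v_def using u_pos
  by (intro continuous_on_ln u_continuous_on) (simp_all, metis atLeast_iff less_irrefl)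

lemma Lv_continuous_on: "x \<in> V \<Longrightarrow> continuous_on {0..} (\<lambda>t. Lv t x)"
  unfolding Lv_def laplacian_def using nbrs_subset
  by (intro continuous_intros v_continuous_on) auto

lemma dv_eq_laplacian_div:
  assumes "x \<in> V" "0 \<le> t"
  shows "dv t x = laplacian V E w mu (u t) x / u t x"
proof -
  have pos: "0 < u t y" if "y \<in> nbrs V E x" for y
    using that nbrs_subset u_pos assms by auto
  have "0 < u t x" using u_pos assms by auto
  have "dv t x = (1 / mu x) * (\<Sum>y\<in>nbrs V E x. w x y * (u t y - u t x) / u t x)"
    unfolding dv_def Psi_def deriv_Upsilon v_def
    using pos \<open>0 < u t x\<close> by (intro arg_cong2[where f="(*)"] refl sum.cong) (simp_all add: exp_diff field_simps)
  thus ?thesis unfolding laplacian_def by (simp add: sum_divide_distrib mult.commute)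
qed

lemma v_deriv: "x \<in> V \<Longrightarrow> 0 < t \<Longrightarrow> ((\<lambda>s. v s x) has_real_derivative dv t x) (at t)"
  unfolding v_def using dv_eq_laplacian_div[of x t] u_pos
  by (auto intro!: derivative_eq_intros u_deriv simp: field_simps)

lemma Lv_deriv:
  assumes "x \<in> V" "0 < t"
  shows "((\<lambda>s. Lv s x) has_real_derivative - laplacian V E w mu (dv t) x) (at t)"
proof -
  have "((\<lambda>s. \<Sum>y\<in>nbrs V E x. w x y * (v s y - v s x)) has_real_derivative
      (\<Sum>y\<in>nbrs V E x. w x y * (dv t y - dv t x))) (at t)"
    using nbrs_subset assms by (intro DERIV_sum DERIV_cmult DERIV_diff v_deriv) auto
  from DERIV_minus[OF DERIV_cmult[OF this, of "1 / mu x"]] show ?thesis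
    unfolding Lv_def laplacian_def by simp
qed

lemma dv_plus_Lv: "dv t x + Lv t x = Psi V E w mu Upsilon (v t) x"
  unfolding dv_def Lv_def Psi_def laplacian_def deriv_Upsilon Upsilon_def
  by (simp add: algebra_simps sum_subtractf[symmetric] sum_distrib_left)

lemma dv_plus_Lv_ge_edge:
  assumes "x \<in> V" "E x y"
  shows "w x y / mu x * Upsilon (v t y - v t x) \<le> dv t x + Lv t x"
proof -
  have "y \<in> nbrs V E x" using assms E_in_V unfolding nbrs_def by auto
  hence "w x y * Upsilon (v t y - v t x) \<le> (\<Sum>z\<in>nbrs V E x. w x z * Upsilon (v t z - v t x))"
    using finite_nbrs by (intro member_le_sum)
      (auto simp: nbrs_def Upsilon_nonneg w_pos less_imp_le)
  thus ?thesis
    using mu_pos[OF \<open>x \<in> V\<close>] unfolding dv_plus_Lv Psi_def by (simp add: divide_right_mono)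
qed

lemma dv_plus_Lv_nonneg: "x \<in> V \<Longrightarrow> 0 \<le> dv t x + Lv t x"
  unfolding dv_plus_Lv Psi_def using mu_pos
  by (intro mult_nonneg_nonneg sum_nonneg) (auto simp: nbrs_def Upsilon_nonneg w_pos less_imp_le)

end

locale graph_heat_CD = graph_heat +
  fixes F phi :: "real \<Rightarrow> real"
  assumes CD_fun: "CD_function F" and relaxation: "relaxation_function F phi"
    and CD_cond: "CD V E w mu F"
begin

lemma CD_at_maximum:
  assumes "x \<in> V" "0 < Lv t x" "\<forall>y\<in>V. Lv t y \<le> Lv t x"
  shows "F (Lv t x) \<le> laplacian V E w mu (dv t) x"
proof -
  have "dv t = Psi V E w mu (deriv Upsilon) (v t)"
    unfolding dv_def ..
  moreover have "\<forall>y\<in>nbrs V E x. Lv t y \<le> Lv t x"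
    using assms(3) nbrs_subset by blast
  ultimately show ?thesis
    using CD_cond[unfolded CD_def Let_def, rule_format, OF assms(1), of "v t"] assms(2)
    unfolding Lv_def by simp
qed

lemma Lv_less_scaled_relaxation:
  assumes "1 < k" "x \<in> V" "0 < t"
  shows "Lv t x < k * phi t"
proof (rule barrier_principle[OF finite_V Lv_continuous_on _ _ _ assms(2,3)])
  show "continuous_on {0<..} (\<lambda>t. k * phi t)"
    by (intro continuous_intros relaxation_function_continuous_on[OF relaxation])
  show "filterlim (\<lambda>t. k * phi t) at_top (at_right 0)"
    using relaxation \<open>1 < k\<close> unfolding relaxation_function_def
    by (intro filterlim_tendsto_pos_mult_at_top[OF tendsto_const]) auto
next
  fix s x assume s: "0 < s" "x \<in> V" "\<forall>y\<in>V. Lv s y \<le> Lv s x" "k * phi s \<le> Lv s x"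
  have "0 < k * phi s"
    using relaxation_function_pos[OF relaxation s(1)] \<open>1 < k\<close> by simp
  have "- laplacian V E w mu (dv s) x \<le> - F (Lv s x)"
    using CD_at_maximum[OF s(2) _ s(3)] s(4) \<open>0 < k * phi s\<close> by simp
  also have "\<dots> \<le> - F (k * phi s)"
    using CD_function_mono[OF CD_fun \<open>0 < k * phi s\<close> s(4)] by simp
  also have "\<dots> < k * - F (phi s)"
    using CD_function_scale_less[OF CD_fun relaxation_function_pos[OF relaxation s(1)] \<open>1 < k\<close>]
    by simp
  finally show "\<exists>f' psi'. ((\<lambda>t. Lv t x) has_real_derivative f') (at s)
      \<and> ((\<lambda>t. k * phi t) has_real_derivative psi') (at s) \<and> f' < psi'"
    using Lv_deriv[OF s(2,1)] relaxation_function_deriv[OF relaxation s(1)]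
    by (blast intro: DERIV_cmult)
qed

lemma Lv_le_relaxation:
  assumes "x \<in> V" "0 < t"
  shows "Lv t x \<le> phi t"
proof (rule ccontr)
  assume "\<not> ?thesis"
  moreover have "0 < phi t" using relaxation_function_pos[OF relaxation \<open>0 < t\<close>] .
  ultimately have "1 < Lv t x / phi t" by simp
  from Lv_less_scaled_relaxation[OF this assms] \<open>0 < phi t\<close> show False by simp
qed

lemma v_plus_antiderivative_mono:
  assumes "x \<in> V" "0 < s" "s \<le> t"
    and Phi_cont: "continuous_on {s..t} Phi"
    and Phi_deriv: "\<And>r. s < r \<Longrightarrow> r < t \<Longrightarrow> (Phi has_real_derivative phi r) (at r)"
  shows "v s x + Phi s \<le> v t x + Phi t"
proof (rule DERIV_nonneg_imp_increasing_open[of s t "\<lambda>r. v r x + Phi r"])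
  fix r assume r: "s < r" "r < t"
  have "((\<lambda>r. v r x + Phi r) has_real_derivative dv r x + phi r) (at r)"
    using r assms by (intro DERIV_add v_deriv Phi_deriv) auto
  moreover have "0 \<le> dv r x + phi r"
    using dv_plus_Lv_nonneg[OF \<open>x \<in> V\<close>, of r] Lv_le_relaxation[OF \<open>x \<in> V\<close>, of r] r assms
    by linarith
  ultimately show "\<exists>y. ((\<lambda>r. v r x + Phi r) has_real_derivative y) (at r) \<and> 0 \<le> y"
    by blast
next
  show "continuous_on {s..t} (\<lambda>r. v r x + Phi r)"
    using assms by (intro continuous_intros Phi_cont continuous_on_subset[OF v_continuous_on]) auto
qed (use assms in auto)

lemma dv_plus_relaxation_ge_gradient:
  assumes "E y x" "0 < t" "v t y \<le> v t x"
  shows "w y x / mu y * (v t x - v t y)\<^sup>2 / 2 \<le> dv t y + phi t"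
proof -
  have y: "y \<in> V" using E_in_V[OF \<open>E y x\<close>] by simp
  have "(v t x - v t y)\<^sup>2 / 2 \<le> Upsilon (v t x - v t y)"
    using Upsilon_ge_half_square \<open>v t y \<le> v t x\<close> by simp
  moreover have "0 \<le> w y x / mu y" using w_pos[OF \<open>E y x\<close>] mu_pos[OF y] by simp
  ultimately have "w y x / mu y * ((v t x - v t y)\<^sup>2 / 2) \<le> w y x / mu y * Upsilon (v t x - v t y)"
    by (rule mult_left_mono)
  also have "\<dots> \<le> dv t y + Lv t y" using dv_plus_Lv_ge_edge[OF y \<open>E y x\<close>] .
  also have "\<dots> \<le> dv t y + phi t" using Lv_le_relaxation[OF y \<open>0 < t\<close>] by simp
  finally show ?thesis by simp
qed

lemma edge_harnack:
  assumes "E x y" "0 < s" "s < t" "0 < c" "c \<le> w x y / mu y"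
    and Phi_cont: "continuous_on {s..t} Phi"
    and Phi_deriv: "\<And>r. s < r \<Longrightarrow> r < t \<Longrightarrow> (Phi has_real_derivative phi r) (at r)"
  shows "v s x + Phi s \<le> v t y + Phi t + 2 / (c * (t - s))"
proof (rule ccontr)
  define D where "D m = v s x + Phi s - (v m y + Phi m)" for m
  assume "\<not> ?thesis"
  hence D_t: "2 / (c * (t - s)) < D t" unfolding D_def by linarith
  have x: "x \<in> V" and y: "y \<in> V" using E_in_V[OF \<open>E x y\<close>] by auto
  have mono: "v a z + Phi a \<le> v b z + Phi b" if "z \<in> V" "s \<le> a" "a \<le> b" "b \<le> t" for z a b
    using that \<open>0 < s\<close> by (intro v_plus_antiderivative_mono continuous_on_subset[OF Phi_cont] Phi_deriv) auto
  have D_pos: "\<forall>m\<in>{s..t}. 0 < D m"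
  proof
    fix m assume "m \<in> {s..t}"
    hence "D t \<le> D m" using mono[OF y, of m t] unfolding D_def by auto
    moreover have "0 < 2 / (c * (t - s))" using \<open>0 < c\<close> \<open>s < t\<close> by simp
    ultimately show "0 < D m" using D_t by linarith
  qed
  have "D t < 2 / (c * (t - s))"
  proof (rule riccati_comparison[OF \<open>s < t\<close> \<open>0 < c\<close> _ D_pos])
    show "continuous_on {s..t} D"
      unfolding D_def using \<open>0 < s\<close>
      by (intro continuous_intros Phi_cont continuous_on_subset[OF v_continuous_on[OF y]]) auto
  next
    fix m assume m: "s < m" "m < t"
    have "(D has_real_derivative - (dv m y + phi m)) (at m)"
      unfolding D_def using m \<open>0 < s\<close> y by (auto intro!: derivative_eq_intros v_deriv Phi_deriv)
    moreover have "c * (D m)\<^sup>2 / 2 \<le> dv m y + phi m"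
    proof -
      have "0 < D m" "D m \<le> v m x - v m y"
        using D_pos mono[OF x, of s m] m unfolding D_def by auto
      hence "c * (D m)\<^sup>2 / 2 \<le> w y x / mu y * (v m x - v m y)\<^sup>2 / 2"
        using assms(4,5) w_sym[OF \<open>E x y\<close>]
        by (intro divide_right_mono mult_mono power_mono) auto
      also have "\<dots> \<le> dv m y + phi m"
        using \<open>0 < D m\<close> \<open>D m \<le> v m x - v m y\<close> m \<open>0 < s\<close>
        by (intro dv_plus_relaxation_ge_gradient E_sym[OF \<open>E x y\<close>]) auto
      finally show ?thesis .
    qed
    ultimately show "\<exists>D'. (D has_real_derivative D') (at m) \<and> D' \<le> - c * (D m)\<^sup>2 / 2"
      by auto
  qed
  with D_t show False by linarith
qed

lemma walk_harnack:
  assumes walk: "is_walk V E p" and len: "length p = Suc n" and "0 < n" "0 < t1" "t1 < t2" "0 < c"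
    and c_le: "\<And>x y. E x y \<Longrightarrow> c \<le> w x y / mu y"
    and Phi_cont: "continuous_on {t1..t2} Phi"
    and Phi_deriv: "\<And>r. t1 < r \<Longrightarrow> r < t2 \<Longrightarrow> (Phi has_real_derivative phi r) (at r)"
  shows "v t1 (p ! 0) + Phi t1 \<le> v t2 (p ! n) + Phi t2 + 2 * (real n)\<^sup>2 / (c * (t2 - t1))"
proof -
  define tau where "tau = (t2 - t1) / real n"
  define T where "T i = t1 + real i * tau" for i :: nat
  define K where "K = 2 / (c * tau)"
  have "0 < tau" using assms by (simp add: tau_def)
  have T_Suc: "T (Suc i) = T i + tau" for i unfolding T_def by (simp add: algebra_simps)
  have T_n: "T n = t2" using \<open>0 < n\<close> unfolding T_def tau_def by simp
  have T_range: "t1 \<le> T i \<and> T i \<le> t2" if "i \<le> n" for i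
    using mult_right_mono[of "real i" "real n" tau] that \<open>0 < tau\<close> T_n unfolding T_def by auto
  have step: "v (T i) (p ! i) + Phi (T i) \<le> v (T (Suc i)) (p ! Suc i) + Phi (T (Suc i)) + K"
    if "i < n" for i
  proof -
    have "E (p ! i) (p ! Suc i)" using walk len that unfolding is_walk_def by auto
    moreover have "t1 \<le> T i" "T (Suc i) \<le> t2" using T_range[of i] T_range[of "Suc i"] that by auto
    ultimately show ?thesis
      using edge_harnack[of "p ! i" "p ! Suc i" "T i" "T (Suc i)" c Phi] assms c_le \<open>0 < tau\<close>
        continuous_on_subset[OF Phi_cont, of "{T i..T (Suc i)}"]
      unfolding T_Suc K_def by force
  qed
  have "v t1 (p ! 0) + Phi t1 \<le> v (T i) (p ! i) + Phi (T i) + real i * K"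
    if "i \<le> n" for i
    using that
  proof (induction i)
    case 0 thus ?case unfolding T_def by simp
  next
    case (Suc i)
    thus ?case using step[of i] by (simp add: algebra_simps)
  qed
  from this[of n] show ?thesis
    unfolding T_n K_def tau_def using \<open>0 < n\<close> by (simp add: power2_eq_square mult.left_commute)
qed

lemma log_harnack:
  assumes "connected_graph V E" "0 < t1" "t1 < t2" "x1 \<in> V" "x2 \<in> V"
  defines "n \<equiv> graph_dist V E x1 x2"
  shows "v t1 x1 \<le> v t2 x2 + integral {t1..t2} phi
    + 2 * Max (mu ` V) * (real n)\<^sup>2 / (Min {w x y | x y. x \<in> V \<and> y \<in> V \<and> E x y} * (t2 - t1))"
proof -
  define Phi where "Phi = (\<lambda>r. integral {t1..r} phi)"
  have phi_cont: "continuous_on {t1..t2} phi"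
    by (rule continuous_on_subset[OF relaxation_function_continuous_on[OF relaxation]])
      (use \<open>0 < t1\<close> in auto)
  have Phi_cont: "continuous_on {t1..t2} Phi"
    unfolding Phi_def by (intro indefinite_integral_continuous_1 integrable_continuous_real phi_cont)
  have Phi_deriv: "(Phi has_real_derivative phi r) (at r)" if "t1 < r" "r < t2" for r
    using integral_has_real_derivative[OF phi_cont, of r] that
    by (simp add: Phi_def at_within_Icc_at)
  obtain p where p: "is_walk V E p" "length p = Suc n" "p ! 0 = x1" "p ! n = x2"
    using connected_graph_shortest_walk[OF assms(1,4,5)] unfolding n_def by blast
  show ?thesis
  proof (cases "n = 0")
    case True
    thus ?thesis
      using v_plus_antiderivative_mono[OF \<open>x1 \<in> V\<close> \<open>0 < t1\<close> _ Phi_cont Phi_deriv] p \<open>t1 < t2\<close>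
      by (simp add: Phi_def)
  next
    case False
    define c where "c = Min {w x y | x y. x \<in> V \<and> y \<in> V \<and> E x y} / Max (mu ` V)"
    have "E (p ! 0) (p ! 1)" using p False unfolding is_walk_def by auto
    hence "0 < c" and "\<And>x y. E x y \<Longrightarrow> c \<le> w x y / mu y"
      unfolding c_def using min_weight_over_max_measure[OF finite_V weighted] by blast+
    with walk_harnack[OF p(1,2) _ \<open>0 < t1\<close> \<open>t1 < t2\<close> _ _ Phi_cont Phi_deriv] False p(3,4)
    have "v t1 x1 + Phi t1 \<le> v t2 x2 + Phi t2 + 2 * (real n)\<^sup>2 / (c * (t2 - t1))"
      by auto
    thus ?thesis by (simp add: Phi_def c_def field_simps)
  qed
qed

end

theorem theorem1p2:
  fixes V :: "'a set" and E :: "'a \<Rightarrow> 'a \<Rightarrow> bool" and w :: "'a \<Rightarrow> 'a \<Rightarrow> real"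
    and mu :: "'a \<Rightarrow> real" and F phi :: "real \<Rightarrow> real" and u :: "real \<Rightarrow> 'a \<Rightarrow> real"
    and t1 t2 :: real and x1 x2 :: 'a
  assumes "finite V" and "weighted_graph V E w mu" and "connected_graph V E"
    and "CD_function F" and "relaxation_function F phi" and "CD V E w mu F"
    and "heat_solution V E w mu u" and "\<forall>t\<ge>0. \<forall>x\<in>V. u t x > 0"
    and "0 < t1" and "t1 < t2" and "x1 \<in> V" and "x2 \<in> V"
  shows "u t1 x1 \<le> u t2 x2 * exp (integral {t1..t2} phi)
           * exp (2 * Max (mu ` V) * (real (graph_dist V E x1 x2))\<^sup>2
                  / (Min {w x y | x y. x \<in> V \<and> y \<in> V \<and> E x y} * (t2 - t1)))"
proof -
  interpret graph_heat_CD V E w mu u F phi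
    using assms by unfold_locales auto
  have "0 < u t1 x1" "0 < u t2 x2" using assms by auto
  hence "u t1 x1 = exp (v t1 x1)" "exp (v t2 x2) = u t2 x2" unfolding v_def by simp_all
  with log_harnack[OF assms(3,9-12), THEN exp_mono] show ?thesis
    by (simp only: exp_add)
qed

end
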